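(* Let $P\in\mathbb{P}^2$ be a point at which the conic $C_2$ is smooth. Then: \begin{enumerate} \item If $P\in (C_2\cap L)\setminus L_\infty$, then $(D,P)$ is of type $a_{3\iota_1-1}$. \item If $P\in (C_2\cap L_\infty)\setminus L$, then $D$ is smooth at $P$ and tangent to $L_\infty$ at $P$ with $I(D,L_\infty;P)=2\iota_2$. \item If $P\in C_2\cap L\cap L_\infty$, then $(D,P)$ is of type $a_{3\iota_1+\iota_2-1}$. \end{enumerate}
   Context: Work in $\mathbb{P}^2$ with homogeneous coordinates $[X:Y:Z]$, $L_\infty=\{Z=0\}$. Let $F_1'$ and $F_2'$ be homogeneous polynomials of degrees $1$ and $2$, let $L=\{F_1'=0\}$ be a line with $L\neq L_\infty$, and $C_2=\{F_2'=0\}$ a conic having neither $L$ nor $L_\infty$ as a component. Let $D=\{G=0\}$ be the quartic with $G=F_2'^2+F_1'^3Z$. For a point $P$ set $\iota_1=I(C_2,L;P)$ and $\iota_2=I(C_2,L_\infty;P)$ (local intersection multiplicities). For $n\ge1$, "$(D,P)$ is of type $a_n$" means the germ of $D$ at $P$ is topologically equivalent to the germ $x^2+y^{n+1}=0$ at the origin. *)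

theory Defs
  imports "HOL-Analysis.Analysis"
begin

text \<open>Points of P^2 over the complex numbers are represented by nonzero triples
  (homogeneous coordinates [X:Y:Z]); a plane curve is represented by a homogeneous
  polynomial function F X Y Z.  A line is given by its coefficient triple (a,b,c),
  i.e. the line aX+bY+cZ = 0; the line at infinity is (0,0,1).\<close>

type_synonym pt = "complex \<times> complex \<times> complex"
type_synonym hpoly = "complex \<Rightarrow> complex \<Rightarrow> complex \<Rightarrow> complex"

definition ev :: "hpoly \<Rightarrow> pt \<Rightarrow> complex" where
  "ev F p = (case p of (x, y, z) \<Rightarrow> F x y z)"

definition on_line :: "pt \<Rightarrow> pt \<Rightarrow> bool" where
  "on_line l p = (case l of (a, b, c) \<Rightarrow> (case p of (x, y, z) \<Rightarrow> a*x + b*y + c*z = 0))"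

definition proportional :: "pt \<Rightarrow> pt \<Rightarrow> bool" where
  "proportional p q = (\<exists>t. case p of (x, y, z) \<Rightarrow> q = (t*x, t*y, t*z))"

definition vanish_order :: "(complex \<Rightarrow> complex) \<Rightarrow> nat" where
  "vanish_order f = (LEAST k. (deriv ^^ k) f 0 \<noteq> 0)"

definition imult :: "hpoly \<Rightarrow> pt \<Rightarrow> pt \<Rightarrow> nat" where
  "imult F l P =
    (if \<not> on_line l P then 0
     else (let Q = (SOME Q. on_line l Q \<and> \<not> proportional P Q) in
           (case P of (p1, p2, p3) \<Rightarrow> (case Q of (q1, q2, q3) \<Rightarrow>
             vanish_order (\<lambda>s. F (p1 + s*q1) (p2 + s*q2) (p3 + s*q3))))))"

definition dX :: "hpoly \<Rightarrow> pt \<Rightarrow> complex" where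
  "dX F p = (case p of (x, y, z) \<Rightarrow> deriv (\<lambda>t. F t y z) x)"
definition dY :: "hpoly \<Rightarrow> pt \<Rightarrow> complex" where
  "dY F p = (case p of (x, y, z) \<Rightarrow> deriv (\<lambda>t. F x t z) y)"
definition dZ :: "hpoly \<Rightarrow> pt \<Rightarrow> complex" where
  "dZ F p = (case p of (x, y, z) \<Rightarrow> deriv (\<lambda>t. F x y t) z)"

definition smooth_at :: "hpoly \<Rightarrow> pt \<Rightarrow> bool" where
  "smooth_at F p = (ev F p = 0 \<and> (dX F p \<noteq> 0 \<or> dY F p \<noteq> 0 \<or> dZ F p \<noteq> 0))"

definition germ_equiv ::
  "(complex \<times> complex) set \<Rightarrow> complex \<times> complex \<Rightarrow> (complex \<times> complex) set \<Rightarrow> complex \<times> complex \<Rightarrow> bool" where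
  "germ_equiv A a B b =
    (\<exists>U V h k. open U \<and> open V \<and> a \<in> U \<and> b \<in> V \<and> homeomorphism U V h k \<and>
       h a = b \<and> h ` (A \<inter> U) = B \<inter> V)"

definition a_germ :: "nat \<Rightarrow> (complex \<times> complex) set" where
  "a_germ n = {(x, y). x^2 + y^(n+1) = 0}"

definition type_a :: "hpoly \<Rightarrow> nat \<Rightarrow> pt \<Rightarrow> bool" where
  "type_a F n P = (n \<ge> 1 \<and> (case P of (x0, y0, z0) \<Rightarrow>
      (z0 \<noteq> 0 \<and> germ_equiv {(x, y). F x y 1 = 0} (x0/z0, y0/z0) (a_germ n) (0, 0)) \<or>
      (x0 \<noteq> 0 \<and> germ_equiv {(y, z). F 1 y z = 0} (y0/x0, z0/x0) (a_germ n) (0, 0)) \<or>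
      (y0 \<noteq> 0 \<and> germ_equiv {(x, z). F x 1 z = 0} (x0/y0, z0/y0) (a_germ n) (0, 0))))"

end

theory Submission
  imports Defs "HOL-Computational_Algebra.Polynomial"
begin

text \<open>Work in a projective frame \<open>P, Q, R\<close> at \<open>P\<close> with \<open>Q\<close> on \<open>L\<close> (and \<open>R\<close> on
  \<open>L\<^sub>\<infinity>\<close> when \<open>P \<in> L\<^sub>\<infinity>\<close>). On \<open>P + s Q + t R\<close> the line is \<open>t = 0\<close>, the conic is
  \<open>q = \<alpha> s\<^sup>2 + \<gamma> s t + \<epsilon> t\<^sup>2 + \<beta> s + \<delta> t\<close> with \<open>\<beta>, \<delta>\<close> the polars of \<open>P\<close> with \<open>Q, R\<close>, and the
  quartic becomes \<open>q\<^sup>2 + w t\<^sup>3\<close> with \<open>w\<close> a unit if \<open>P \<notin> L\<^sub>\<infinity>\<close> and \<open>w = \<kappa> s\<close> otherwise.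
  The multiplicity \<open>\<iota>\<^sub>1\<close> is 1 or 2 according as \<open>\<beta> \<noteq> 0\<close> or \<open>\<beta> = 0\<close>, and then \<open>\<alpha> \<noteq> 0\<close>
  (\<open>L\<close> is no component) and \<open>\<delta> \<noteq> 0\<close> (\<open>P\<close> is smooth); likewise \<open>\<delta>\<close> governs \<open>\<iota>\<^sub>2\<close>.
  Completing the square gives \<open>E \<cdot> (q\<^sup>2 + w t\<^sup>3) = X\<^sup>2 + W Y\<^sup>n\<^sup>+\<^sup>1\<close> with units \<open>E, W\<close> and
  local coordinates \<open>X, Y\<close>, where \<open>n\<close> is the predicted index; then \<open>(X / \<surd>W, Y)\<close> is a local
  homeomorphism onto the germ of \<open>x\<^sup>2 + y\<^sup>n\<^sup>+\<^sup>1 = 0\<close> by the inverse function theorem and invariance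
  of domain. At a point of \<open>L\<^sub>\<infinity>\<close> off \<open>L\<close> the quartic restricts to \<open>L\<^sub>\<infinity>\<close> as \<open>F\<^sub>2\<^sup>2\<close>,
  and \<open>\<partial>/\<partial>Z\<close> of it is \<open>F\<^sub>1\<^sup>3 \<noteq> 0\<close>.\<close>

section \<open>Topological equivalence of germs\<close>

lemma germ_equivI:
  fixes f :: "complex \<times> complex \<Rightarrow> complex \<times> complex"
  assumes "open U" "a \<in> U" "continuous_on U f" "inj_on f U" "f a = b"
    and "\<And>x. x \<in> U \<Longrightarrow> x \<in> A \<longleftrightarrow> f x \<in> B"
  shows "germ_equiv A a B b"
proof -
  obtain g where "homeomorphism U (f ` U) f g"
    using invariance_of_domain_homeomorphism[OF assms(1,3) _ assms(4)] by auto
  moreover have "open (f ` U)"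
    using invariance_of_domain[OF assms(3,1,4)] .
  moreover have "f ` (A \<inter> U) = B \<inter> f ` U"
    using assms(6) by auto
  ultimately show ?thesis
    unfolding germ_equiv_def using assms(1,2,5) by blast
qed

lemma germ_equivE:
  assumes "germ_equiv A a B b"
  obtains U f where "open U" "a \<in> U" "continuous_on U f" "inj_on f U" "f a = b"
    "\<And>x. x \<in> U \<Longrightarrow> x \<in> A \<longleftrightarrow> f x \<in> B"
proof -
  obtain U V h k where UV: "open U" "a \<in> U" "homeomorphism U V h k" "h a = b"
    "h ` (A \<inter> U) = B \<inter> V"
    using assms unfolding germ_equiv_def by blast
  have inj: "inj_on h U"
    using UV(3) unfolding homeomorphism_def by (metis inj_on_inverseI)
  have cont: "continuous_on U h"
    using UV(3) unfolding homeomorphism_def by auto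
  have hU: "h ` U = V"
    using UV(3) unfolding homeomorphism_def by auto
  have "x \<in> A \<longleftrightarrow> h x \<in> B" if "x \<in> U" for x
  proof
    assume "x \<in> A"
    then show "h x \<in> B"
      using UV(5) that by blast
  next
    assume "h x \<in> B"
    then have "h x \<in> h ` (A \<inter> U)"
      using UV(5) hU that by blast
    then obtain y where "y \<in> A \<inter> U" "h y = h x"
      by auto
    then show "x \<in> A"
      using inj that by (metis IntD1 IntD2 inj_onD)
  qed
  then show ?thesis
    using that UV inj cont by blast
qed

lemma germ_equiv_trans:
  assumes "germ_equiv A a B b" "germ_equiv B b C c"
  shows "germ_equiv A a C c"
proof -
  obtain U1 f1 where 1: "open U1" "a \<in> U1" "continuous_on U1 f1" "inj_on f1 U1" "f1 a = b"
    "\<And>x. x \<in> U1 \<Longrightarrow> x \<in> A \<longleftrightarrow> f1 x \<in> B"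
    using germ_equivE[OF assms(1)] by metis
  obtain U2 f2 where 2: "open U2" "b \<in> U2" "continuous_on U2 f2" "inj_on f2 U2" "f2 b = c"
    "\<And>x. x \<in> U2 \<Longrightarrow> x \<in> B \<longleftrightarrow> f2 x \<in> C"
    using germ_equivE[OF assms(2)] by metis
  define U where "U = U1 \<inter> f1 -` U2"
  have "open U"
    unfolding U_def using 1(1,3) 2(1) continuous_open_preimage by blast
  moreover have "a \<in> U"
    using 1(2,5) 2(2) by (simp add: U_def)
  moreover have "continuous_on U (f2 \<circ> f1)"
    by (rule continuous_on_compose)
      (use 1(3) 2(3) in \<open>auto simp: U_def intro: continuous_on_subset\<close>)
  moreover have "inj_on (f2 \<circ> f1) U"
    using 1(4) 2(4) unfolding U_def inj_on_def by auto
  moreover have "(f2 \<circ> f1) a = c"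
    using 1(5) 2(5) by simp
  moreover have "x \<in> A \<longleftrightarrow> (f2 \<circ> f1) x \<in> C" if "x \<in> U" for x
    using 1(6) 2(6) that by (simp add: U_def)
  ultimately show ?thesis
    by (rule germ_equivI[where f = "f2 \<circ> f1"])
qed

section \<open>Continuously differentiable functions of two complex variables\<close>

definition C1_on :: "(complex \<times> complex \<Rightarrow> complex) \<Rightarrow> (complex \<times> complex) set \<Rightarrow> bool" where
  "C1_on f S \<longleftrightarrow> (\<exists>fs ft. (\<forall>p\<in>S. (f has_derivative (\<lambda>h. fs p * fst h + ft p * snd h)) (at p)) \<and>
     continuous_on S fs \<and> continuous_on S ft)"

lemma C1_onI:
  assumes "\<And>p. p \<in> S \<Longrightarrow> (f has_derivative (\<lambda>h. fs p * fst h + ft p * snd h)) (at p)"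
    and "continuous_on S fs" "continuous_on S ft"
  shows "C1_on f S"
  using assms unfolding C1_on_def by blast

lemma C1_on_subset:
  assumes "C1_on f S" "T \<subseteq> S"
  shows "C1_on f T"
proof -
  obtain fs ft where
    "\<And>p. p \<in> S \<Longrightarrow> (f has_derivative (\<lambda>h. fs p * fst h + ft p * snd h)) (at p)"
    "continuous_on S fs" "continuous_on S ft"
    using assms(1) unfolding C1_on_def by blast
  then show ?thesis
    using assms(2) by (intro C1_onI[where fs = fs and ft = ft]) (auto intro: continuous_on_subset)
qed

lemma C1_on_imp_continuous_on:
  assumes "C1_on f S"
  shows "continuous_on S f"
proof -
  obtain fs ft where "\<And>p. p \<in> S \<Longrightarrow> (f has_derivative (\<lambda>h. fs p * fst h + ft p * snd h)) (at p)"
    using assms unfolding C1_on_def by blast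
  then show ?thesis
    by (intro continuous_at_imp_continuous_on ballI has_derivative_continuous)
qed

lemma C1_on_differentiable: "C1_on f S \<Longrightarrow> a \<in> S \<Longrightarrow> f differentiable (at a)"
  unfolding C1_on_def differentiable_def by blast

lemma C1_on_const: "C1_on (\<lambda>p. c) S"
  by (rule C1_onI[where fs = "\<lambda>p. 0" and ft = "\<lambda>p. 0"]) auto

lemma C1_on_fst: "C1_on fst S"
  by (rule C1_onI[where fs = "\<lambda>p. 1" and ft = "\<lambda>p. 0"])
    (auto intro: has_derivative_eq_rhs[OF has_derivative_fst[OF has_derivative_ident]])

lemma C1_on_snd: "C1_on snd S"
  by (rule C1_onI[where fs = "\<lambda>p. 0" and ft = "\<lambda>p. 1"])
    (auto intro: has_derivative_eq_rhs[OF has_derivative_snd[OF has_derivative_ident]])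

lemma C1_on_add:
  assumes "C1_on f S" "C1_on g S"
  shows "C1_on (\<lambda>p. f p + g p) S"
proof -
  obtain fs ft where
    f: "\<And>p. p \<in> S \<Longrightarrow> (f has_derivative (\<lambda>h. fs p * fst h + ft p * snd h)) (at p)"
      "continuous_on S fs" "continuous_on S ft"
    using assms(1) unfolding C1_on_def by blast
  obtain gs gt where
    g: "\<And>p. p \<in> S \<Longrightarrow> (g has_derivative (\<lambda>h. gs p * fst h + gt p * snd h)) (at p)"
      "continuous_on S gs" "continuous_on S gt"
    using assms(2) unfolding C1_on_def by blast
  show ?thesis
  proof (rule C1_onI[where fs = "\<lambda>p. fs p + gs p" and ft = "\<lambda>p. ft p + gt p"])
    show "((\<lambda>p. f p + g p) has_derivative (\<lambda>h. (fs p + gs p) * fst h + (ft p + gt p) * snd h)) (at p)"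
      if "p \<in> S" for p
      using has_derivative_add[OF f(1) g(1), OF that that]
      by (rule has_derivative_eq_rhs) (auto simp: fun_eq_iff algebra_simps)
  qed (intro continuous_intros f g)+
qed

lemma C1_on_mult:
  assumes "C1_on f S" "C1_on g S"
  shows "C1_on (\<lambda>p. f p * g p) S"
proof -
  obtain fs ft where
    f: "\<And>p. p \<in> S \<Longrightarrow> (f has_derivative (\<lambda>h. fs p * fst h + ft p * snd h)) (at p)"
      "continuous_on S fs" "continuous_on S ft"
    using assms(1) unfolding C1_on_def by blast
  obtain gs gt where
    g: "\<And>p. p \<in> S \<Longrightarrow> (g has_derivative (\<lambda>h. gs p * fst h + gt p * snd h)) (at p)"
      "continuous_on S gs" "continuous_on S gt"
    using assms(2) unfolding C1_on_def by blast
  have cont: "continuous_on S f" "continuous_on S g"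
    using assms by (simp_all add: C1_on_imp_continuous_on)
  show ?thesis
  proof (rule C1_onI[where fs = "\<lambda>p. fs p * g p + f p * gs p" and ft = "\<lambda>p. ft p * g p + f p * gt p"])
    show "((\<lambda>p. f p * g p) has_derivative
        (\<lambda>h. (fs p * g p + f p * gs p) * fst h + (ft p * g p + f p * gt p) * snd h)) (at p)"
      if "p \<in> S" for p
      using has_derivative_mult[OF f(1) g(1), OF that that]
      by (rule has_derivative_eq_rhs) (auto simp: fun_eq_iff algebra_simps)
  qed (intro continuous_intros f g cont)+
qed

lemma C1_on_minus: "C1_on f S \<Longrightarrow> C1_on (\<lambda>p. - f p) S"
  using C1_on_mult[OF C1_on_const[of "-1"]] by simp

lemma C1_on_diff: "C1_on f S \<Longrightarrow> C1_on g S \<Longrightarrow> C1_on (\<lambda>p. f p - g p) S"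
  using C1_on_add[OF _ C1_on_minus] by simp

lemma C1_on_power: "C1_on f S \<Longrightarrow> C1_on (\<lambda>p. f p ^ n) S"
  by (induction n) (auto intro: C1_on_const C1_on_mult)

lemma C1_on_compose:
  assumes u: "C1_on u S"
    and g: "\<And>p. p \<in> S \<Longrightarrow> (g has_field_derivative g' (u p)) (at (u p))"
    and g'_cont: "continuous_on (u ` S) g'"
  shows "C1_on (\<lambda>p. g (u p)) S"
proof -
  obtain us ut where
    du: "\<And>p. p \<in> S \<Longrightarrow> (u has_derivative (\<lambda>h. us p * fst h + ut p * snd h)) (at p)"
      and cont: "continuous_on S us" "continuous_on S ut"
    using u unfolding C1_on_def by blast
  have "continuous_on S (\<lambda>p. g' (u p))"
    using continuous_on_compose2[OF g'_cont C1_on_imp_continuous_on[OF u]] by blast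
  show ?thesis
  proof (rule C1_onI[where fs = "\<lambda>p. g' (u p) * us p" and ft = "\<lambda>p. g' (u p) * ut p"])
    show "((\<lambda>p. g (u p)) has_derivative (\<lambda>h. g' (u p) * us p * fst h + g' (u p) * ut p * snd h)) (at p)"
      if "p \<in> S" for p
      using has_derivative_compose[OF du[OF that] g[OF that, unfolded has_field_derivative_def]]
      by (rule has_derivative_eq_rhs) (auto simp: fun_eq_iff algebra_simps)
  qed (intro continuous_intros cont \<open>continuous_on S (\<lambda>p. g' (u p))\<close>)+
qed

lemma C1_on_inverse:
  assumes "C1_on u S" "\<And>p. p \<in> S \<Longrightarrow> u p \<noteq> 0"
  shows "C1_on (\<lambda>p. inverse (u p)) S"
  by (rule C1_on_compose[OF assms(1), where g' = "\<lambda>z. - (inverse z ^ 2)"])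
    (use assms(2) in \<open>auto intro!: DERIV_inverse[THEN DERIV_cong] continuous_intros
      simp: power2_eq_square\<close>)

lemma C1_on_divide:
  assumes "C1_on f S" "C1_on g S" "\<And>p. p \<in> S \<Longrightarrow> g p \<noteq> 0"
  shows "C1_on (\<lambda>p. f p / g p) S"
  unfolding divide_inverse using assms by (intro C1_on_mult C1_on_inverse)

lemma C1_on_csqrt:
  assumes "C1_on u S" "\<And>p. p \<in> S \<Longrightarrow> u p \<notin> \<real>\<^sub>\<le>\<^sub>0"
  shows "C1_on (\<lambda>p. csqrt (u p)) S"
proof (rule C1_on_compose[OF assms(1), where g' = "\<lambda>z. inverse (2 * csqrt z)"])
  show "(csqrt has_field_derivative inverse (2 * csqrt (u p))) (at (u p))" if "p \<in> S" for p
    using assms(2)[OF that] by (rule has_field_derivative_csqrt)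
  have "u ` S \<subseteq> - \<real>\<^sub>\<le>\<^sub>0"
    using assms(2) by blast
  then have "continuous_on (u ` S) csqrt"
    by (rule continuous_on_subset[OF continuous_on_csqrt])
  moreover have "2 * csqrt z \<noteq> 0" if "z \<in> u ` S" for z
    using assms(2) that by fastforce
  ultimately show "continuous_on (u ` S) (\<lambda>z. inverse (2 * csqrt z))"
    by (intro continuous_intros) auto
qed

lemmas C1_on_intros =
  C1_on_const C1_on_fst C1_on_snd C1_on_add C1_on_mult C1_on_minus C1_on_diff C1_on_power

lemma onorm_matrix2_le:
  fixes m11 m12 m21 m22 :: complex
  shows "onorm (\<lambda>v::complex \<times> complex. (m11 * fst v + m12 * snd v, m21 * fst v + m22 * snd v))
     \<le> cmod m11 + cmod m12 + cmod m21 + cmod m22"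
proof (rule onorm_le)
  fix v :: "complex \<times> complex"
  have f: "cmod (fst v) \<le> norm v" "cmod (snd v) \<le> norm v"
    using norm_fst_le[of "fst v" "snd v"] norm_snd_le[of "snd v" "fst v"] by auto
  have "norm (m11 * fst v + m12 * snd v, m21 * fst v + m22 * snd v)
      \<le> cmod (m11 * fst v + m12 * snd v) + cmod (m21 * fst v + m22 * snd v)"
    by (rule norm_Pair_le)
  also have "\<dots> \<le> (cmod m11 * cmod (fst v) + cmod m12 * cmod (snd v))
      + (cmod m21 * cmod (fst v) + cmod m22 * cmod (snd v))"
    by (intro add_mono order_trans[OF norm_triangle_ineq]) (auto simp: norm_mult)
  also have "\<dots> \<le> (cmod m11 * norm v + cmod m12 * norm v) + (cmod m21 * norm v + cmod m22 * norm v)"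
    by (intro add_mono mult_left_mono f) auto
  finally show "norm (m11 * fst v + m12 * snd v, m21 * fst v + m22 * snd v)
      \<le> (cmod m11 + cmod m12 + cmod m21 + cmod m22) * norm v"
    by (simp add: algebra_simps)
qed

lemma onorm_matrix2_continuous_at:
  fixes m11 m12 m21 m22 :: "complex \<times> complex \<Rightarrow> complex"
  assumes "isCont m11 a" "isCont m12 a" "isCont m21 a" "isCont m22 a" "e > 0"
  shows "\<exists>d>0. \<forall>x. dist a x < d \<longrightarrow>
    onorm (\<lambda>v. (m11 x * fst v + m12 x * snd v, m21 x * fst v + m22 x * snd v)
      - (m11 a * fst v + m12 a * snd v, m21 a * fst v + m22 a * snd v)) < e"
proof -
  define \<delta> where "\<delta> x = cmod (m11 x - m11 a) + cmod (m12 x - m12 a) + cmod (m21 x - m21 a)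
    + cmod (m22 x - m22 a)" for x
  have "isCont \<delta> a"
    unfolding \<delta>_def using assms(1-4) by (intro continuous_intros)
  then obtain r where r: "r > 0" "\<And>x. dist x a < r \<Longrightarrow> dist (\<delta> x) (\<delta> a) < e"
    using \<open>e > 0\<close> unfolding continuous_at_eps_delta by blast
  show ?thesis
  proof (intro exI[of _ r] conjI allI impI)
    fix x
    assume "dist a x < r"
    then have "\<bar>\<delta> x - \<delta> a\<bar> < e"
      using r(2) by (simp add: dist_commute dist_real_def)
    moreover have "\<delta> a = 0"
      by (simp add: \<delta>_def)
    moreover have "onorm (\<lambda>v. (m11 x * fst v + m12 x * snd v, m21 x * fst v + m22 x * snd v)
        - (m11 a * fst v + m12 a * snd v, m21 a * fst v + m22 a * snd v)) \<le> \<delta> x"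
      using onorm_matrix2_le[of "m11 x - m11 a" "m12 x - m12 a" "m21 x - m21 a" "m22 x - m22 a"]
      unfolding \<delta>_def by (simp add: algebra_simps)
    ultimately show "onorm (\<lambda>v. (m11 x * fst v + m12 x * snd v, m21 x * fst v + m22 x * snd v)
        - (m11 a * fst v + m12 a * snd v, m21 a * fst v + m22 a * snd v)) < e"
      by linarith
  qed (rule r(1))
qed

lemma has_derivative_linear2_unique:
  fixes f :: "complex \<times> complex \<Rightarrow> complex"
  assumes "(f has_derivative (\<lambda>h. a * fst h + b * snd h)) (at p)"
    and "(f has_derivative (\<lambda>h. a' * fst h + b' * snd h)) (at p)"
  shows "a = a'" "b = b'"
proof -
  have "(\<lambda>h. a * fst h + b * snd h) = (\<lambda>h. a' * fst h + b' * snd h)"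
    using assms by (rule has_derivative_unique)
  from fun_cong[OF this, of "(1, 0)"] fun_cong[OF this, of "(0, 1)"]
  show "a = a'" "b = b'" by simp_all
qed

lemma C1_on_locally_injective:
  assumes S: "open S" "a \<in> S" and C1: "C1_on f S" "C1_on g S"
    and df: "(f has_derivative (\<lambda>h. fa * fst h + fb * snd h)) (at a)"
    and dg: "(g has_derivative (\<lambda>h. ga * fst h + gb * snd h)) (at a)"
    and det: "fa * gb - fb * ga \<noteq> 0"
  obtains r where "r > 0" "ball a r \<subseteq> S" "inj_on (\<lambda>p. (f p, g p)) (ball a r)"
proof -
  obtain fs ft where f: "\<And>p. p \<in> S \<Longrightarrow> (f has_derivative (\<lambda>h. fs p * fst h + ft p * snd h)) (at p)"
      and cf: "continuous_on S fs" "continuous_on S ft"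
    using C1(1) unfolding C1_on_def by blast
  obtain gs gt where g: "\<And>p. p \<in> S \<Longrightarrow> (g has_derivative (\<lambda>h. gs p * fst h + gt p * snd h)) (at p)"
      and cg: "continuous_on S gs" "continuous_on S gt"
    using C1(2) unfolding C1_on_def by blast
  have a: "fs a = fa" "ft a = fb" "gs a = ga" "gt a = gb"
    using has_derivative_linear2_unique[OF f[OF S(2)] df] has_derivative_linear2_unique[OF g[OF S(2)] dg]
    by auto
  define J where "J p h = (fs p * fst h + ft p * snd h, gs p * fst h + gt p * snd h)" for p h
  have dJ: "((\<lambda>p. (f p, g p)) has_derivative J p) (at p)" if "p \<in> S" for p
    unfolding J_def using f[OF that] g[OF that] by (rule has_derivative_Pair)
  define d where "d = fa * gb - fb * ga"
  define K where "K w = ((gb * fst w - fb * snd w) / d, (fa * snd w - ga * fst w) / d)" for w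
  have bl: "bounded_linear K"
    unfolding K_def divide_inverse
    by (intro bounded_linear_Pair bounded_linear_sub bounded_linear_mult_left
        bounded_linear_compose[OF bounded_linear_mult_left]
        bounded_linear_compose[OF bounded_linear_mult_right] bounded_linear_fst bounded_linear_snd)
  have inv: "K \<circ> J a = id"
    using det unfolding K_def J_def d_def a by (auto simp: fun_eq_iff field_simps)
  have "isCont fs a" "isCont ft a" "isCont gs a" "isCont gt a"
    using cf cg S by (simp_all add: continuous_on_eq_continuous_at)
  then have "\<exists>d>0. \<forall>x. dist a x < d \<longrightarrow> onorm (\<lambda>v. J x v - J a v) < e" if "e > 0" for e
    unfolding J_def using that by (rule onorm_matrix2_continuous_at)
  then show ?thesis
    using has_derivative_locally_injective[OF S(2,1) bl inv dJ] that by blast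
qed

lemma C1_on_inverse_sqrt:
  assumes "C1_on W UNIV" "W a \<noteq> 0"
  obtains S r where "open S" "a \<in> S" "C1_on r S" "\<And>p. p \<in> S \<Longrightarrow> W p * r p ^ 2 = 1"
proof -
  define S where "S = {p. 0 < Re (W p / W a)}"
  have "open S"
    unfolding S_def using C1_on_imp_continuous_on[OF assms(1)] assms(2)
    by (intro open_Collect_less continuous_intros) auto
  have W_S: "W p / W a \<notin> \<real>\<^sub>\<le>\<^sub>0" "W p \<noteq> 0" if "p \<in> S" for p
    using that by (auto simp: S_def complex_nonpos_Reals_iff)
  \<comment> \<open>Dividing by \<open>W a\<close> keeps the argument of \<open>csqrt\<close> away from its branch cut.\<close>
  define r where "r p = inverse (csqrt (W a) * csqrt (W p / W a))" for p
  have "C1_on r S"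
    unfolding r_def using W_S assms
    by (intro C1_on_inverse C1_on_mult C1_on_const C1_on_csqrt C1_on_divide C1_on_subset[OF assms(1)]) auto
  moreover have "W p * r p ^ 2 = 1" if "p \<in> S" for p
  proof -
    have "(csqrt (W a) * csqrt (W p / W a)) ^ 2 = W p"
      using assms(2) by (simp add: power_mult_distrib)
    moreover have "r p ^ 2 = inverse ((csqrt (W a) * csqrt (W p / W a)) ^ 2)"
      unfolding r_def by (rule power_inverse)
    ultimately show ?thesis
      using W_S(2)[OF that] by simp
  qed
  moreover have "a \<in> S"
    using assms(2) by (simp add: S_def)
  ultimately show ?thesis
    using that \<open>open S\<close> by blast
qed

section \<open>Normal forms of type \<open>a\<^sub>n\<close>\<close>

text \<open>The germ is carried onto the model by the local homeomorphism \<open>(X / \<surd>W, Y)\<close>.\<close>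

lemma germ_equiv_a_germI:
  fixes Gl X Y W E :: "complex \<times> complex \<Rightarrow> complex"
  assumes eq: "\<And>p. E p * Gl p = X p ^ 2 + W p * Y p ^ (n + 1)"
    and E: "continuous_on UNIV E" "E (0, 0) \<noteq> 0"
    and W: "C1_on W UNIV" "W (0, 0) \<noteq> 0"
    and X: "C1_on X UNIV" "X (0, 0) = 0" "(X has_derivative (\<lambda>h. xa * fst h + xb * snd h)) (at (0, 0))"
    and Y: "C1_on Y UNIV" "Y (0, 0) = 0" "(Y has_derivative (\<lambda>h. ya * fst h + yb * snd h)) (at (0, 0))"
    and det: "xa * yb - xb * ya \<noteq> 0"
  shows "germ_equiv {p. Gl p = 0} (0, 0) (a_germ n) (0, 0)"
proof -
  obtain S0 r where S0: "open S0" "(0, 0) \<in> S0" "C1_on r S0" "\<And>p. p \<in> S0 \<Longrightarrow> W p * r p ^ 2 = 1"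
    using C1_on_inverse_sqrt[OF W] by blast
  define S where "S = S0 \<inter> {p. E p \<noteq> 0}"
  have "open S"
    unfolding S_def using S0(1) E(1) by (intro open_Int open_Collect_neq continuous_intros)
  have "(0, 0) \<in> S" "C1_on r S"
    using S0(2,3) E(2) by (auto simp: S_def intro: C1_on_subset)
  obtain r' where "(r has_derivative r') (at (0, 0))"
    using C1_on_differentiable[OF \<open>C1_on r S\<close> \<open>(0, 0) \<in> S\<close>] unfolding differentiable_def by blast
  then have dX': "((\<lambda>p. X p * r p) has_derivative
      (\<lambda>h. (r (0, 0) * xa) * fst h + (r (0, 0) * xb) * snd h)) (at (0, 0))"
    using X(2) by (intro has_derivative_eq_rhs[OF has_derivative_mult[OF X(3)]])
      (simp_all add: fun_eq_iff algebra_simps)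
  have "r (0, 0) \<noteq> 0"
    using S0(2,4) by fastforce
  then have "r (0, 0) * xa * yb - r (0, 0) * xb * ya \<noteq> 0"
    using det by (simp add: algebra_simps flip: right_diff_distrib)
  then obtain \<rho> where \<rho>: "\<rho> > 0" "ball (0, 0) \<rho> \<subseteq> S"
      and inj: "inj_on (\<lambda>p. (X p * r p, Y p)) (ball (0, 0) \<rho>)"
    using C1_on_locally_injective[OF \<open>open S\<close> \<open>(0, 0) \<in> S\<close>
        C1_on_mult[OF C1_on_subset[OF X(1)] \<open>C1_on r S\<close>] C1_on_subset[OF Y(1)] dX' Y(3)]
    by blast
  show ?thesis
  proof (rule germ_equivI[OF _ _ _ inj])
    show "continuous_on (ball (0, 0) \<rho>) (\<lambda>p. (X p * r p, Y p))"
      using C1_on_imp_continuous_on[OF C1_on_subset[OF \<open>C1_on r S\<close> \<rho>(2)]]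
        C1_on_imp_continuous_on[OF X(1)] C1_on_imp_continuous_on[OF Y(1)]
      by (intro continuous_intros) (auto intro: continuous_on_subset)
    fix p :: "complex \<times> complex"
    assume "p \<in> ball (0, 0) \<rho>"
    then have "p \<in> S0" "E p \<noteq> 0"
      using \<rho>(2) by (auto simp: S_def)
    then have "E p * Gl p = W p * ((X p * r p) ^ 2 + Y p ^ (n + 1))" "W p \<noteq> 0"
      using eq[of p] S0(4)[of p] by (auto simp: algebra_simps power_mult_distrib)
    then show "p \<in> {p. Gl p = 0} \<longleftrightarrow> (X p * r p, Y p) \<in> a_germ n"
      using \<open>E p \<noteq> 0\<close> by (auto simp: a_germ_def)
  qed (use \<rho> X(2) Y(2) in auto)
qed


lemma germ_equiv_a2:
  fixes Gl w :: "complex \<times> complex \<Rightarrow> complex"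
  assumes Gl: "\<And>s t. Gl (s, t) = (\<alpha> * s^2 + \<gamma> * s * t + \<epsilon> * t^2 + \<beta> * s + \<delta> * t)^2 + w (s, t) * t^3"
    and w: "C1_on w UNIV" "w (0, 0) \<noteq> 0" and "\<beta> \<noteq> 0"
  shows "germ_equiv {p. Gl p = 0} (0, 0) (a_germ 2) (0, 0)"
proof -
  define q where "q p = \<alpha> * fst p^2 + \<gamma> * fst p * snd p + \<epsilon> * snd p^2 + \<beta> * fst p + \<delta> * snd p" for p
  obtain w' where dw: "(w has_derivative w') (at (0, 0))"
    using C1_on_differentiable[OF w(1)] unfolding differentiable_def by blast
  show ?thesis
  proof (rule germ_equiv_a_germI[where E = "\<lambda>p. w p ^ 2" and W = "\<lambda>p. 1"])
    show "w p ^ 2 * Gl p = (w p * q p) ^ 2 + 1 * (w p * snd p) ^ (2 + 1)" for p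
      using Gl[of "fst p" "snd p"] by (simp add: q_def algebra_simps power2_eq_square power3_eq_cube)
    show "((\<lambda>p. w p * q p) has_derivative (\<lambda>h. (w (0, 0) * \<beta>) * fst h + (w (0, 0) * \<delta>) * snd h)) (at (0, 0))"
      unfolding q_def by (auto intro!: derivative_eq_intros dw simp: fun_eq_iff algebra_simps)
    show "((\<lambda>p. w p * snd p) has_derivative (\<lambda>h. 0 * fst h + w (0, 0) * snd h)) (at (0, 0))"
      by (auto intro!: derivative_eq_intros dw simp: fun_eq_iff)
  qed (use w \<open>\<beta> \<noteq> 0\<close> in \<open>auto simp: q_def intro!: C1_on_intros C1_on_imp_continuous_on\<close>)
qed

lemma germ_equiv_a3:
  fixes Gl w :: "complex \<times> complex \<Rightarrow> complex"
  assumes Gl: "\<And>s t. Gl (s, t) = (\<alpha> * s^2 + \<gamma> * s * t + \<epsilon> * t^2 + \<beta> * s + \<delta> * t)^2 + w (s, t) * s * t^3"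
    and w: "C1_on w UNIV" "w (0, 0) \<noteq> 0" and nz: "\<beta> \<noteq> 0" "\<delta> \<noteq> 0"
  shows "germ_equiv {p. Gl p = 0} (0, 0) (a_germ 3) (0, 0)"
proof -
  define q where "q p = \<alpha> * fst p^2 + \<gamma> * fst p * snd p + \<epsilon> * snd p^2 + \<beta> * fst p + \<delta> * snd p" for p
  define m where "m p = \<beta> + \<alpha> * fst p + \<gamma> * snd p" for p
  define n where "n p = \<delta> + \<epsilon> * snd p" for p :: "complex \<times> complex"
  obtain w' where dw: "(w has_derivative w') (at (0, 0))"
    using C1_on_differentiable[OF w(1)] unfolding differentiable_def by blast
  show ?thesis
  proof (rule germ_equiv_a_germI[where E = "\<lambda>p. 4 * m p ^ 2" and W = "\<lambda>p. - (w p ^ 2 * snd p ^ 2 + 4 * m p * w p * n p)"])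
    show "4 * m p ^ 2 * Gl p = (2 * m p * q p + w p * snd p ^ 3) ^ 2
        + - (w p ^ 2 * snd p ^ 2 + 4 * m p * w p * n p) * snd p ^ (3 + 1)" for p
    proof -
      have square: "4 * m^2 * (q^2 + k * s * t^3) = (2 * m * q + k * t^3)^2 + - (k^2 * t^2 + 4 * m * k * n) * t^4"
        if "q = s * m + t * n" for q s t m n k :: complex
        using that by algebra
      have "Gl p = q p ^ 2 + w p * fst p * snd p ^ 3"
        using Gl[of "fst p" "snd p"] by (simp add: q_def)
      moreover have "q p = fst p * m p + snd p * n p"
        by (simp add: q_def m_def n_def algebra_simps power2_eq_square)
      ultimately show ?thesis
        using square by (simp add: mult.assoc)
    qed
    show "((\<lambda>p. 2 * m p * q p + w p * snd p ^ 3) has_derivative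
        (\<lambda>h. (2 * \<beta> * \<beta>) * fst h + (2 * \<beta> * \<delta>) * snd h)) (at (0, 0))"
      unfolding q_def m_def by (auto intro!: derivative_eq_intros dw simp: fun_eq_iff algebra_simps)
    show "((snd :: complex \<times> complex \<Rightarrow> complex) has_derivative (\<lambda>h. 0 * fst h + 1 * snd h)) (at (0, 0))"
      by (auto intro!: derivative_eq_intros simp: fun_eq_iff)
  qed (use w nz in \<open>auto simp: q_def m_def n_def intro!: C1_on_intros C1_on_imp_continuous_on\<close>)
qed

lemma germ_equiv_a4:
  fixes Gl w :: "complex \<times> complex \<Rightarrow> complex"
  assumes Gl: "\<And>s t. Gl (s, t) = (\<alpha> * s^2 + \<gamma> * s * t + \<epsilon> * t^2 + \<beta> * s)^2 + w (s, t) * s * t^3"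
    and w: "C1_on w UNIV" "w (0, 0) \<noteq> 0" and nz: "\<beta> \<noteq> 0" "\<epsilon> \<noteq> 0"
  shows "germ_equiv {p. Gl p = 0} (0, 0) (a_germ 4) (0, 0)"
proof -
  define q where "q p = \<alpha> * fst p^2 + \<gamma> * fst p * snd p + \<epsilon> * snd p^2 + \<beta> * fst p" for p
  define m where "m p = \<beta> + \<alpha> * fst p + \<gamma> * snd p" for p
  obtain w' where dw: "(w has_derivative w') (at (0, 0))"
    using C1_on_differentiable[OF w(1)] unfolding differentiable_def by blast
  show ?thesis
  proof (rule germ_equiv_a_germI[where E = "\<lambda>p. 4 * m p ^ 2" and W = "\<lambda>p. - (w p ^ 2 * snd p + 4 * m p * w p * \<epsilon>)"])
    show "4 * m p ^ 2 * Gl p = (2 * m p * q p + w p * snd p ^ 3) ^ 2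
        + - (w p ^ 2 * snd p + 4 * m p * w p * \<epsilon>) * snd p ^ (4 + 1)" for p
    proof -
      have square: "4 * m^2 * (q^2 + k * s * t^3) = (2 * m * q + k * t^3)^2 + - (k^2 * t + 4 * m * k * e) * t^5"
        if "q = s * m + e * t^2" for q s t m e k :: complex
        using that by algebra
      have "Gl p = q p ^ 2 + w p * fst p * snd p ^ 3"
        using Gl[of "fst p" "snd p"] by (simp add: q_def)
      moreover have "q p = fst p * m p + \<epsilon> * snd p ^ 2"
        by (simp add: q_def m_def algebra_simps power2_eq_square)
      ultimately show ?thesis
        using square by (simp add: mult.assoc)
    qed
    show "((\<lambda>p. 2 * m p * q p + w p * snd p ^ 3) has_derivative
        (\<lambda>h. (2 * \<beta> * \<beta>) * fst h + 0 * snd h)) (at (0, 0))"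
      unfolding q_def m_def by (auto intro!: derivative_eq_intros dw simp: fun_eq_iff algebra_simps)
    show "((snd :: complex \<times> complex \<Rightarrow> complex) has_derivative (\<lambda>h. 0 * fst h + 1 * snd h)) (at (0, 0))"
      by (auto intro!: derivative_eq_intros simp: fun_eq_iff)
  qed (use w nz in \<open>auto simp: q_def m_def intro!: C1_on_intros C1_on_imp_continuous_on\<close>)
qed

text \<open>For \<open>\<beta> = 0\<close> the conic is tangent to \<open>t = 0\<close>, and on it \<open>t \<approx> -\<alpha> s\<^sup>2 / \<delta>\<close>, so the
  term \<open>w s\<^sup>j t\<^sup>3\<close> has order \<open>j + 6\<close> in \<open>s\<close>; the correction \<open>U\<close> completes the square.\<close>

lemma germ_equiv_a5_plus:
  fixes Gl w :: "complex \<times> complex \<Rightarrow> complex"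
  assumes Gl: "\<And>s t. Gl (s, t) = (\<alpha> * s^2 + \<gamma> * s * t + \<epsilon> * t^2 + \<delta> * t)^2 + w (s, t) * s^j * t^3"
    and w: "C1_on w UNIV" "w (0, 0) \<noteq> 0" and nz: "\<alpha> \<noteq> 0" "\<delta> \<noteq> 0"
  shows "germ_equiv {p. Gl p = 0} (0, 0) (a_germ (j + 5)) (0, 0)"
proof -
  define q where "q p = \<alpha> * fst p^2 + \<gamma> * fst p * snd p + \<epsilon> * snd p^2 + \<delta> * snd p" for p
  define m where "m p = \<delta> + \<gamma> * fst p + \<epsilon> * snd p" for p
  define k where "k p = w p * fst p ^ j" for p
  define U where "U p = m p ^ 3 + k p * q p - 3 * k p * \<alpha> * fst p ^ 2" for p
  obtain w' where dw: "(w has_derivative w') (at (0, 0))"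
    using C1_on_differentiable[OF w(1)] unfolding differentiable_def by blast
  show ?thesis
  proof (rule germ_equiv_a_germI[where E = "\<lambda>p. 4 * U p * m p ^ 3"
        and W = "\<lambda>p. - ((3 * w p * \<alpha>^2)^2 * fst p ^ (j + 2) + 4 * U p * w p * \<alpha>^3)"
        and X = "\<lambda>p. 2 * U p * q p + 3 * w p * \<alpha>^2 * fst p ^ (j + 4)"])
    show "4 * U p * m p ^ 3 * Gl p = (2 * U p * q p + 3 * w p * \<alpha>^2 * fst p ^ (j + 4)) ^ 2
        + - ((3 * w p * \<alpha>^2)^2 * fst p ^ (j + 2) + 4 * U p * w p * \<alpha>^3) * fst p ^ (j + 5 + 1)" for p
    proof -
      have square: "4 * (m^3 + w * v * q - 3 * (w * v) * a * s^2) * m^3 * (q^2 + w * v * t^3)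
          = (2 * (m^3 + w * v * q - 3 * (w * v) * a * s^2) * q + 3 * w * a^2 * (v * s^4))^2
            + - ((3 * w * a^2)^2 * (v * s^2) + 4 * (m^3 + w * v * q - 3 * (w * v) * a * s^2) * w * a^3)
              * (v * s^6)"
        if "m * t = q - a * s^2" for m t q a s w v :: complex
        using that by algebra
      have mt: "m p * snd p = q p - \<alpha> * fst p ^ 2"
        by (simp add: q_def m_def algebra_simps power2_eq_square)
      have "Gl p = q p ^ 2 + w p * fst p ^ j * snd p ^ 3"
        using Gl[of "fst p" "snd p"] by (simp add: q_def)
      moreover have "fst p ^ (j + 4) = fst p ^ j * fst p ^ 4" "fst p ^ (j + 2) = fst p ^ j * fst p ^ 2"
        "fst p ^ (j + 5 + 1) = fst p ^ j * fst p ^ 6"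
        by (simp_all only: power_add[symmetric]) (simp_all add: add.commute)
      ultimately show ?thesis
        unfolding U_def k_def by (simp only:) (rule square[OF mt])
    qed
    show "((\<lambda>p. 2 * U p * q p + 3 * w p * \<alpha>^2 * fst p ^ (j + 4)) has_derivative
        (\<lambda>h. 0 * fst h + (2 * \<delta>^3 * \<delta>) * snd h)) (at (0, 0))"
      unfolding U_def k_def q_def m_def
      by (auto intro!: derivative_eq_intros dw simp: fun_eq_iff algebra_simps power_0_left)
    show "((fst :: complex \<times> complex \<Rightarrow> complex) has_derivative (\<lambda>h. 1 * fst h + 0 * snd h)) (at (0, 0))"
      by (auto intro!: derivative_eq_intros simp: fun_eq_iff)
  qed (use w nz in \<open>auto simp: U_def k_def q_def m_def intro!: C1_on_intros C1_on_imp_continuous_on\<close>)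
qed

lemma germ_equiv_sq_plus_unit_t3:
  fixes Gl w :: "complex \<times> complex \<Rightarrow> complex"
  assumes "\<And>s t. Gl (s, t) = (\<alpha> * s^2 + \<gamma> * s * t + \<epsilon> * t^2 + \<beta> * s + \<delta> * t)^2 + w (s, t) * t^3"
    and "C1_on w UNIV" "w (0, 0) \<noteq> 0" "\<alpha> \<noteq> 0 \<or> \<beta> \<noteq> 0" "\<beta> \<noteq> 0 \<or> \<delta> \<noteq> 0"
  shows "germ_equiv {p. Gl p = 0} (0, 0) (a_germ (if \<beta> \<noteq> 0 then 2 else 5)) (0, 0)"
  using assms germ_equiv_a2[of Gl] germ_equiv_a5_plus[where Gl = Gl and j = 0] by auto

lemma germ_equiv_sq_plus_s_t3:
  fixes Gl :: "complex \<times> complex \<Rightarrow> complex"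
  assumes "\<And>s t. Gl (s, t) = (\<alpha> * s^2 + \<gamma> * s * t + \<epsilon> * t^2 + \<beta> * s + \<delta> * t)^2 + \<kappa> * s * t^3"
    and "\<kappa> \<noteq> 0" "\<alpha> \<noteq> 0 \<or> \<beta> \<noteq> 0" "\<epsilon> \<noteq> 0 \<or> \<delta> \<noteq> 0" "\<beta> \<noteq> 0 \<or> \<delta> \<noteq> 0"
  shows "germ_equiv {p. Gl p = 0} (0, 0) (a_germ (if \<beta> \<noteq> 0 then if \<delta> \<noteq> 0 then 3 else 4 else 6)) (0, 0)"
  using assms germ_equiv_a3[where w = "\<lambda>p. \<kappa>"] germ_equiv_a4[where w = "\<lambda>p. \<kappa>"]
    germ_equiv_a5_plus[where w = "\<lambda>p. \<kappa>" and j = 1]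
  by (auto simp: C1_on_const)

section \<open>Projective frames and affine charts\<close>

definition det3 :: "pt \<Rightarrow> pt \<Rightarrow> pt \<Rightarrow> complex" where
  "det3 X Y Z = (case X of (x1, x2, x3) \<Rightarrow> case Y of (y1, y2, y3) \<Rightarrow> case Z of (z1, z2, z3) \<Rightarrow>
     x1 * (y2 * z3 - y3 * z2) - x2 * (y1 * z3 - y3 * z1) + x3 * (y1 * z2 - y2 * z1))"

definition scale3 :: "complex \<Rightarrow> pt \<Rightarrow> pt" where
  "scale3 k X = (case X of (x, y, z) \<Rightarrow> (k * x, k * y, k * z))"

definition lin_comb3 :: "complex \<Rightarrow> pt \<Rightarrow> complex \<Rightarrow> pt \<Rightarrow> complex \<Rightarrow> pt \<Rightarrow> pt" where
  "lin_comb3 a P b Q c R = (case P of (p1, p2, p3) \<Rightarrow> case Q of (q1, q2, q3) \<Rightarrow> case R of (r1, r2, r3) \<Rightarrow>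
     (a * p1 + b * q1 + c * r1, a * p2 + b * q2 + c * r2, a * p3 + b * q3 + c * r3))"

abbreviation frame_point :: "pt \<Rightarrow> pt \<Rightarrow> pt \<Rightarrow> complex \<Rightarrow> complex \<Rightarrow> pt" where
  "frame_point P Q R s t \<equiv> lin_comb3 1 P s Q t R"

lemma det3_cramer:
  "scale3 (det3 P Q R) X = lin_comb3 (det3 X Q R) P (det3 P X R) Q (det3 P Q X) R"
  by (cases P, cases Q, cases R, cases X) (simp add: det3_def scale3_def lin_comb3_def algebra_simps)

lemma lin_comb3_eq_scale3_frame_point:
  "a \<noteq> 0 \<Longrightarrow> lin_comb3 a P b Q c R = scale3 a (frame_point P Q R (b / a) (c / a))"
  by (cases P, cases Q, cases R) (simp add: scale3_def lin_comb3_def algebra_simps)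

lemma scale3_cancel: "k \<noteq> 0 \<Longrightarrow> scale3 k X = scale3 m Y \<Longrightarrow> X = scale3 (m / k) Y"
  by (cases X, cases Y) (simp add: scale3_def field_simps)

lemma det3_scale3_left: "det3 (scale3 k X) Y Z = k * det3 X Y Z"
  by (cases X, cases Y, cases Z) (simp add: det3_def scale3_def algebra_simps)

lemma det3_scale3_same:
  "det3 X (scale3 k X) Z = 0" "det3 X Y (scale3 k X) = 0"
  by (cases X, cases Y, cases Z, simp add: det3_def scale3_def algebra_simps)+

lemma continuous_on_det3 [continuous_intros]:
  "continuous_on S A \<Longrightarrow> continuous_on S B \<Longrightarrow> continuous_on S C \<Longrightarrow>
    continuous_on S (\<lambda>u. det3 (A u) (B u) (C u))"
  unfolding det3_def case_prod_beta by (intro continuous_intros)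

text \<open>An affine chart \<open>ch\<close>, normalised by the linear form \<open>lam\<close>, and the frame
  \<open>(s, t) \<mapsto> P + s Q + t R\<close> parametrise the same points of the projective plane near \<open>P\<close>;
  Cramer's rule gives the change of coordinates.\<close>

lemma germ_equiv_chart_frame:
  fixes G :: hpoly and ch :: "complex \<times> complex \<Rightarrow> pt" and lam :: "pt \<Rightarrow> complex"
  assumes hom: "\<And>k X. ev G (scale3 k X) = k ^ d * ev G X"
    and D: "det3 P Q R \<noteq> 0"
    and lam: "\<And>k X. lam (scale3 k X) = k * lam X" "\<And>u. lam (ch u) = 1"
    and ch: "inj ch" "continuous_on UNIV ch"
    and u0: "ch u0 = scale3 (inverse (lam P)) P" "lam P \<noteq> 0"
  shows "germ_equiv {u. ev G (ch u) = 0} u0 {p. ev G (frame_point P Q R (fst p) (snd p)) = 0} (0, 0)"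
proof -
  define \<mu> where "\<mu> u = det3 (ch u) Q R" for u
  define \<phi> where "\<phi> u = (det3 P (ch u) R / \<mu> u, det3 P Q (ch u) / \<mu> u)" for u
  define F where "F u = frame_point P Q R (fst (\<phi> u)) (snd (\<phi> u))" for u
  define U where "U = {u. \<mu> u \<noteq> 0}"
  have cont: "continuous_on UNIV \<mu>" "continuous_on UNIV (\<lambda>u. det3 P (ch u) R)"
    "continuous_on UNIV (\<lambda>u. det3 P Q (ch u))"
    unfolding \<mu>_def using ch(2) by (intro continuous_intros; simp)+
  have "open U"
    unfolding U_def using cont(1) by (intro open_Collect_neq continuous_intros)
  have "u0 \<in> U"
    using D u0 by (simp add: U_def \<mu>_def det3_scale3_left)
  have ch_F: "ch u = scale3 (\<mu> u / det3 P Q R) (F u)" if "u \<in> U" for u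
    using det3_cramer[of P Q R "ch u"] lin_comb3_eq_scale3_frame_point[of "\<mu> u"] that D
    by (intro scale3_cancel) (simp_all add: U_def \<mu>_def \<phi>_def F_def)
  have "inj_on \<phi> U"
  proof (rule inj_onI)
    fix u v
    assume uv: "u \<in> U" "v \<in> U" "\<phi> u = \<phi> v"
    then have "F u = F v"
      by (simp add: F_def)
    have "\<mu> u / det3 P Q R * lam (F u) = 1" "\<mu> v / det3 P Q R * lam (F u) = 1"
      using lam ch_F[OF uv(1)] ch_F[OF uv(2)] \<open>F u = F v\<close> by metis+
    then have "\<mu> u / det3 P Q R = \<mu> v / det3 P Q R"
      by (metis mult_cancel_right mult_zero_left zero_neq_one)
    then have "ch u = ch v"
      using ch_F[OF uv(1)] ch_F[OF uv(2)] \<open>F u = F v\<close> by metis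
    then show "u = v"
      using ch(1) by (simp add: inj_eq)
  qed
  moreover have "continuous_on U \<phi>"
    unfolding \<phi>_def U_def using cont(1) continuous_on_subset[OF ch(2)]
    by (intro continuous_intros) (auto intro: continuous_on_subset)
  moreover have "\<phi> u0 = (0, 0)"
    using u0 by (simp add: \<phi>_def det3_scale3_same)
  moreover have "u \<in> {u. ev G (ch u) = 0} \<longleftrightarrow> \<phi> u \<in> {p. ev G (frame_point P Q R (fst p) (snd p)) = 0}"
    if "u \<in> U" for u
    using hom[of "\<mu> u / det3 P Q R" "F u"] ch_F[OF that] that D by (simp add: U_def F_def)
  ultimately show ?thesis
    by (intro germ_equivI[OF \<open>open U\<close> \<open>u0 \<in> U\<close>]) auto
qed

lemma type_a_of_frame_germ:
  fixes G :: hpoly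
  assumes hom: "\<And>k X. ev G (scale3 k X) = k ^ d * ev G X"
    and D: "det3 P Q R \<noteq> 0" and P: "P \<noteq> (0, 0, 0)" and "n \<ge> 1"
    and germ: "germ_equiv {p. ev G (frame_point P Q R (fst p) (snd p)) = 0} (0, 0) (a_germ n) (0, 0)"
  shows "type_a G n P"
proof -
  have chart: "germ_equiv {u. ev G (ch u) = 0} u0 (a_germ n) (0, 0)"
    if "\<And>k X. lam (scale3 k X) = k * lam X" "\<And>u. lam (ch u) = 1" "inj ch" "continuous_on UNIV ch"
      "ch u0 = scale3 (inverse (lam P)) P" "lam P \<noteq> 0"
    for ch :: "complex \<times> complex \<Rightarrow> pt" and lam u0
    using germ_equiv_trans[OF germ_equiv_chart_frame[OF hom D that] germ] .
  obtain x0 y0 z0 where P_eq: "P = (x0, y0, z0)"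
    by (cases P)
  consider "z0 \<noteq> 0" | "z0 = 0" "x0 \<noteq> 0" | "z0 = 0" "x0 = 0" "y0 \<noteq> 0"
    using P P_eq by blast
  then show ?thesis
  proof cases
    case 1
    have "{u. ev G (fst u, snd u, 1) = 0} = {(x, y). G x y 1 = 0}"
      by (auto simp: ev_def)
    moreover have "germ_equiv {u. ev G (fst u, snd u, 1) = 0} (x0 / z0, y0 / z0) (a_germ n) (0, 0)"
      by (rule chart[where lam = "\<lambda>X. snd (snd X)"])
        (use 1 in \<open>auto simp: P_eq scale3_def inj_def field_simps intro!: continuous_intros\<close>)
    ultimately show ?thesis
      using 1 \<open>n \<ge> 1\<close> by (simp add: type_a_def P_eq)
  next
    case 2
    have "{u. ev G (1, fst u, snd u) = 0} = {(y, z). G 1 y z = 0}"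
      by (auto simp: ev_def)
    moreover have "germ_equiv {u. ev G (1, fst u, snd u) = 0} (y0 / x0, z0 / x0) (a_germ n) (0, 0)"
      by (rule chart[where lam = "\<lambda>X. fst X"])
        (use 2 in \<open>auto simp: P_eq scale3_def inj_def field_simps intro!: continuous_intros\<close>)
    ultimately show ?thesis
      using 2 \<open>n \<ge> 1\<close> by (simp add: type_a_def P_eq)
  next
    case 3
    have "{u. ev G (fst u, 1, snd u) = 0} = {(x, z). G x 1 z = 0}"
      by (auto simp: ev_def)
    moreover have "germ_equiv {u. ev G (fst u, 1, snd u) = 0} (x0 / y0, z0 / y0) (a_germ n) (0, 0)"
      by (rule chart[where lam = "\<lambda>X. fst (snd X)"])
        (use 3 in \<open>auto simp: P_eq scale3_def inj_def field_simps intro!: continuous_intros\<close>)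
    ultimately show ?thesis
      using 3 \<open>n \<ge> 1\<close> by (simp add: type_a_def P_eq)
  qed
qed

section \<open>Conics and lines\<close>

definition lin_form :: "pt \<Rightarrow> pt \<Rightarrow> complex" where
  "lin_form l X = (case l of (a, b, c) \<Rightarrow> case X of (x, y, z) \<Rightarrow> a * x + b * y + c * z)"

lemma on_line_iff_lin_form: "on_line l X \<longleftrightarrow> lin_form l X = 0"
  by (cases l, cases X) (simp add: on_line_def lin_form_def)

lemma lin_form_lin_comb3:
  "lin_form l (lin_comb3 a P b Q c R) = a * lin_form l P + b * lin_form l Q + c * lin_form l R"
  by (cases l, cases P, cases Q, cases R) (simp add: lin_form_def lin_comb3_def algebra_simps)

lemma lin_form_scale3: "lin_form l (scale3 k X) = k * lin_form l X"
  by (cases l, cases X) (simp add: lin_form_def scale3_def algebra_simps)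

lemma lin_form_eq_zero_of_det3:
  assumes "det3 P Q R \<noteq> 0" "lin_form g P = 0" "lin_form g Q = 0" "lin_form g R = 0"
  shows "g = (0, 0, 0)"
proof -
  obtain g1 g2 g3 p1 p2 p3 q1 q2 q3 r1 r2 r3 where
    pts: "g = (g1, g2, g3)" "P = (p1, p2, p3)" "Q = (q1, q2, q3)" "R = (r1, r2, r3)"
    by (metis prod.exhaust)
  have "det3 P Q R * g1 = 0" "det3 P Q R * g2 = 0" "det3 P Q R * g3 = 0"
    using assms(2-4) unfolding pts det3_def lin_form_def by (simp_all, algebra+)
  then show ?thesis
    using assms(1) pts by simp
qed

definition quadratic_form :: "hpoly \<Rightarrow> bool" where
  "quadratic_form F \<longleftrightarrow> (\<exists>c1 c2 c3 c4 c5 c6. \<forall>x y z.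
     F x y z = c1 * x^2 + c2 * y^2 + c3 * z^2 + c4 * x * y + c5 * x * z + c6 * y * z)"

definition polar :: "hpoly \<Rightarrow> pt \<Rightarrow> pt \<Rightarrow> complex" where
  "polar F P Q = (case P of (p1, p2, p3) \<Rightarrow> case Q of (q1, q2, q3) \<Rightarrow>
     F (p1 + q1) (p2 + q2) (p3 + q3) - F p1 p2 p3 - F q1 q2 q3)"

lemma quadratic_form_lin_comb3:
  assumes "quadratic_form F"
  shows "ev F (lin_comb3 a P b Q c R) = a^2 * ev F P + b^2 * ev F Q + c^2 * ev F R
    + a * b * polar F P Q + a * c * polar F P R + b * c * polar F Q R"
proof -
  obtain c1 c2 c3 c4 c5 c6 where F: "\<And>x y z. F x y z = c1 * x^2 + c2 * y^2 + c3 * z^2 + c4 * x * y + c5 * x * z + c6 * y * z"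
    using assms unfolding quadratic_form_def by blast
  obtain p1 p2 p3 q1 q2 q3 r1 r2 r3 where pts: "P = (p1, p2, p3)" "Q = (q1, q2, q3)" "R = (r1, r2, r3)"
    by (metis prod.exhaust)
  show ?thesis
    unfolding pts ev_def polar_def lin_comb3_def F by simp algebra
qed

lemma quadratic_form_scale3: "quadratic_form F \<Longrightarrow> ev F (scale3 k X) = k^2 * ev F X"
  unfolding quadratic_form_def by (cases X) (auto simp: ev_def scale3_def algebra_simps power2_eq_square)

lemma polar_self: "quadratic_form F \<Longrightarrow> polar F P P = 2 * ev F P"
  unfolding quadratic_form_def by (cases P) (auto simp: ev_def polar_def algebra_simps power2_eq_square)

lemma polar_eq_gradient:
  assumes "quadratic_form F"
  shows "polar F P Q = lin_form (dX F P, dY F P, dZ F P) Q"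
proof -
  obtain c1 c2 c3 c4 c5 c6 where F: "\<And>x y z. F x y z = c1 * x^2 + c2 * y^2 + c3 * z^2 + c4 * x * y + c5 * x * z + c6 * y * z"
    using assms unfolding quadratic_form_def by blast
  obtain p1 p2 p3 where P: "P = (p1, p2, p3)"
    by (cases P)
  have "dX F P = 2 * c1 * p1 + c4 * p2 + c5 * p3" "dY F P = 2 * c2 * p2 + c4 * p1 + c6 * p3"
    "dZ F P = 2 * c3 * p3 + c5 * p1 + c6 * p2"
    unfolding dX_def dY_def dZ_def P F by (auto intro!: DERIV_imp_deriv derivative_eq_intros simp: algebra_simps)
  then show ?thesis
    by (cases Q) (simp add: P polar_def lin_form_def F algebra_simps power2_eq_square)
qed

lemma polar_ne_zero_of_smooth:
  assumes "quadratic_form F" "smooth_at F P" "det3 P Q R \<noteq> 0"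
  shows "polar F P Q \<noteq> 0 \<or> polar F P R \<noteq> 0"
proof (rule ccontr)
  assume "\<not> ?thesis"
  moreover have "polar F P P = 0"
    using assms(1,2) by (simp add: polar_self smooth_at_def)
  ultimately have "(dX F P, dY F P, dZ F P) = (0, 0, 0)"
    using lin_form_eq_zero_of_det3[OF assms(3)] by (simp add: polar_eq_gradient[OF assms(1)])
  then show False
    using assms(2) by (simp add: smooth_at_def)
qed

text \<open>If the conic contains two points \<open>P\<close>, \<open>Q\<close> of the line \<open>l\<close> and is singular along
  \<open>PQ\<close> in the sense that \<open>polar F P Q = 0\<close>, then \<open>l\<close> is a component: in the coordinates
  \<open>m\<^sub>i\<close> of Cramer's rule, both \<open>F\<close> and \<open>l\<close> are divisible by \<open>m\<^sub>3\<close>.\<close>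

lemma quadratic_form_line_component:
  assumes F: "quadratic_form F" and D: "det3 P Q R \<noteq> 0"
    and l: "lin_form l P = 0" "lin_form l Q = 0" "lin_form l R \<noteq> 0"
    and FPQ: "ev F P = 0" "ev F Q = 0" "polar F P Q = 0"
  shows "\<exists>d e f. \<forall>x y z. F x y z = lin_form l (x, y, z) * (d * x + e * y + f * z)"
proof -
  define M where "M X = (ev F R * det3 P Q X + polar F P R * det3 X Q R + polar F Q R * det3 P X R)
    / (det3 P Q R * lin_form l R)" for X
  have M_linear: "M (x, y, z) = M (1, 0, 0) * x + M (0, 1, 0) * y + M (0, 0, 1) * z" for x y z
  proof -
    obtain p1 p2 p3 q1 q2 q3 r1 r2 r3 where pts: "P = (p1, p2, p3)" "Q = (q1, q2, q3)" "R = (r1, r2, r3)"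
      by (metis prod.exhaust)
    show ?thesis
      unfolding M_def pts det3_def by (simp add: add_divide_distrib diff_divide_distrib) algebra
  qed
  have "F x y z = lin_form l (x, y, z) * M (x, y, z)" for x y z
  proof -
    define X where "X = (x, y, z)"
    define A where "A = det3 P Q X * ev F R + det3 X Q R * polar F P R + det3 P X R * polar F Q R"
    note cramer = det3_cramer[of P Q R X]
    have "det3 P Q R ^ 2 * ev F X = det3 P Q X * A"
      using arg_cong[OF cramer, of "ev F"] FPQ unfolding A_def
      by (simp add: quadratic_form_scale3[OF F] quadratic_form_lin_comb3[OF F] algebra_simps power2_eq_square)
    moreover have "det3 P Q R * lin_form l X = det3 P Q X * lin_form l R"
      using arg_cong[OF cramer, of "lin_form l"] l by (simp add: lin_form_scale3 lin_form_lin_comb3)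
    ultimately have "det3 P Q R * (det3 P Q R * lin_form l R * ev F X) = det3 P Q R * (lin_form l X * A)"
      by algebra
    then have "ev F X = lin_form l X * (A / (det3 P Q R * lin_form l R))"
      using D l(3) by (simp add: field_simps)
    then show ?thesis
      by (simp add: X_def A_def M_def ev_def)
  qed
  then show ?thesis
    using M_linear by metis
qed

lemma vanish_order_poly: "vanish_order (poly p) = (LEAST k. coeff p k \<noteq> 0)"
proof -
  have deriv_poly: "deriv (poly q) = poly (pderiv q)" for q :: "complex poly"
    by (rule ext, rule DERIV_imp_deriv, rule poly_DERIV)
  have "(deriv ^^ k) (poly p) = poly ((pderiv ^^ k) p)" for k
    by (induction k) (auto simp: deriv_poly)
  moreover have "coeff ((pderiv ^^ k) q) 0 = of_nat (fact k) * coeff q k" for k and q :: "complex poly"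
  proof (induction k arbitrary: q)
    case (Suc k)
    have "(pderiv ^^ Suc k) q = (pderiv ^^ k) (pderiv q)"
      by (simp add: funpow_Suc_right del: funpow.simps)
    then show ?case
      using Suc[of "pderiv q"] by (simp add: coeff_pderiv algebra_simps)
  qed simp
  ultimately show ?thesis
    unfolding vanish_order_def by (simp add: poly_0_coeff_0)
qed

lemma vanish_order_quadratic:
  fixes \<alpha> \<beta> :: complex
  assumes "\<alpha> \<noteq> 0 \<or> \<beta> \<noteq> 0"
  shows "vanish_order (\<lambda>s. \<alpha> * s^2 + \<beta> * s) = (if \<beta> \<noteq> 0 then 1 else 2)"
proof -
  have "(\<lambda>s. \<alpha> * s^2 + \<beta> * s) = poly [:0, \<beta>, \<alpha>:]"
    by (auto simp: fun_eq_iff algebra_simps power2_eq_square)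
  then have "vanish_order (\<lambda>s. \<alpha> * s^2 + \<beta> * s) = (LEAST k. coeff [:0, \<beta>, \<alpha>:] k \<noteq> 0)"
    by (simp add: vanish_order_poly)
  also have "\<dots> = (if \<beta> \<noteq> 0 then 1 else 2)"
    using assms by (cases "\<beta> = 0")
      (auto intro!: Least_equality simp: less_Suc_eq_0_disj coeff_pCons split: nat.splits)
  finally show ?thesis .
qed

lemma vanish_order_quadratic_squared:
  fixes \<alpha> \<beta> :: complex
  assumes "\<alpha> \<noteq> 0 \<or> \<beta> \<noteq> 0"
  shows "vanish_order (\<lambda>s. (\<alpha> * s^2 + \<beta> * s)^2) = (if \<beta> \<noteq> 0 then 2 else 4)"
proof -
  have "(\<lambda>s. (\<alpha> * s^2 + \<beta> * s)^2) = poly [:0, 0, \<beta>^2, 2 * \<alpha> * \<beta>, \<alpha>^2:]"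
    by (auto simp: fun_eq_iff algebra_simps power2_eq_square)
  then have "vanish_order (\<lambda>s. (\<alpha> * s^2 + \<beta> * s)^2)
      = (LEAST k. coeff [:0, 0, \<beta>^2, 2 * \<alpha> * \<beta>, \<alpha>^2:] k \<noteq> 0)"
    by (simp add: vanish_order_poly)
  also have "\<dots> = (if \<beta> \<noteq> 0 then 2 else 4)"
  proof (cases "\<beta> = 0")
    case True
    then show ?thesis
      using assms by simp (intro Least_equality; auto simp: coeff_pCons split: nat.splits)
  qed (intro Least_equality; auto simp: coeff_pCons split: nat.splits)
  finally show ?thesis .
qed

lemma proportional_if_cross_eq_zero:
  fixes p1 p2 p3 q1 q2 q3 :: complex
  assumes "(p1, p2, p3) \<noteq> (0, 0, 0)" "p2 * q3 - p3 * q2 = 0" "p3 * q1 - p1 * q3 = 0" "p1 * q2 - p2 * q1 = 0"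
  shows "proportional (p1, p2, p3) (q1, q2, q3)"
proof -
  consider "p1 \<noteq> 0" | "p2 \<noteq> 0" | "p3 \<noteq> 0"
    using assms(1) by auto
  then show ?thesis
  proof cases
    case 1
    then show ?thesis
      using assms unfolding proportional_def by (intro exI[of _ "q1 / p1"]) (auto simp: field_simps)
  next
    case 2
    then show ?thesis
      using assms unfolding proportional_def by (intro exI[of _ "q2 / p2"]) (auto simp: field_simps)
  next
    case 3
    then show ?thesis
      using assms unfolding proportional_def by (intro exI[of _ "q3 / p3"]) (auto simp: field_simps)
  qed
qed

text \<open>The conjugate of the cross product \<open>P \<times> Q\<close> completes \<open>P\<close>, \<open>Q\<close> to a frame:
  the determinant is then \<open>\<parallel>P \<times> Q\<parallel>\<^sup>2\<close>.\<close>

lemma exists_det3_ne_zero: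
  assumes "P \<noteq> (0, 0, 0)" "\<not> proportional P Q"
  obtains R where "det3 P Q R \<noteq> 0"
proof -
  obtain p1 p2 p3 q1 q2 q3 where pts: "P = (p1, p2, p3)" "Q = (q1, q2, q3)"
    by (metis prod.exhaust)
  define w1 w2 w3 where "w1 = p2 * q3 - p3 * q2" "w2 = p3 * q1 - p1 * q3" "w3 = p1 * q2 - p2 * q1"
  have "w1 \<noteq> 0 \<or> w2 \<noteq> 0 \<or> w3 \<noteq> 0"
    using proportional_if_cross_eq_zero assms unfolding pts w1_w2_w3_def by blast
  then have "(cmod w1)^2 > 0 \<or> (cmod w2)^2 > 0 \<or> (cmod w3)^2 > 0"
    by auto
  then have "(cmod w1)^2 + (cmod w2)^2 + (cmod w3)^2 \<noteq> 0"
    using zero_le_power2[of "cmod w1"] zero_le_power2[of "cmod w2"] zero_le_power2[of "cmod w3"]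
    by linarith
  moreover have "det3 P Q (cnj w1, cnj w2, cnj w3) = w1 * cnj w1 + w2 * cnj w2 + w3 * cnj w3"
    unfolding pts det3_def w1_w2_w3_def by (simp add: algebra_simps)
  moreover have "w1 * cnj w1 + w2 * cnj w2 + w3 * cnj w3 = of_real ((cmod w1)^2 + (cmod w2)^2 + (cmod w3)^2)"
    by (simp only: of_real_add complex_norm_square)
  ultimately show ?thesis
    using that by (metis of_real_eq_0_iff)
qed

lemma exists_on_line_not_proportional:
  assumes "l \<noteq> (0, 0, 0)"
  shows "\<exists>Q. on_line l Q \<and> \<not> proportional P Q"
proof (rule ccontr)
  obtain a b c p1 p2 p3 where pts: "l = (a, b, c)" "P = (p1, p2, p3)"
    by (metis prod.exhaust)
  have prop_iff: "proportional P (x, y, z) \<longleftrightarrow> (\<exists>t. x = t * p1 \<and> y = t * p2 \<and> z = t * p3)" for x y z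
    unfolding proportional_def pts by simp
  assume "\<not> ?thesis"
  then have "proportional P (b, -a, 0)" "proportional P (c, 0, -a)" "proportional P (0, c, -b)"
    by (auto simp: pts on_line_def algebra_simps)
  then obtain t1 t2 t3 where t:
    "b = t1 * p1" "- a = t1 * p2" "0 = t1 * p3" "c = t2 * p1" "0 = t2 * p2" "- a = t2 * p3"
    "0 = t3 * p1" "c = t3 * p2" "- b = t3 * p3"
    unfolding prop_iff by blast
  consider "a \<noteq> 0" | "b \<noteq> 0" | "c \<noteq> 0"
    using assms pts by blast
  then show False
  proof cases
    case 1
    then show False using t(2,3,6) by auto
  next
    case 2
    then show False using t(1,3,9) by auto
  next
    case 3
    then show False using t(4,5,8) by auto
  qed
qed

text \<open>\<open>Q\<close> is the point chosen by \<open>SOME\<close> in the definition of \<open>imult\<close>; the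
  multiplicities are computed with this very point.\<close>

lemma imult_eq_vanish_order:
  assumes "on_line l P" "Q = (SOME Q. on_line l Q \<and> \<not> proportional P Q)"
  shows "imult F l P = vanish_order (\<lambda>s. ev F (frame_point P Q Q s 0))"
proof -
  obtain p1 p2 p3 q1 q2 q3 where pts: "P = (p1, p2, p3)" "Q = (q1, q2, q3)"
    by (metis prod.exhaust)
  have "(SOME Q. on_line l Q \<and> \<not> proportional (p1, p2, p3) Q) = (q1, q2, q3)"
    using assms(2) pts by simp
  then show ?thesis
    using assms(1) unfolding imult_def pts by (simp add: Let_def ev_def lin_comb3_def)
qed

lemma imult_conic_line:
  assumes "quadratic_form F" "ev F P = 0" "on_line l P" "Q = (SOME Q. on_line l Q \<and> \<not> proportional P Q)"
    and "ev F Q \<noteq> 0 \<or> polar F P Q \<noteq> 0"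
  shows "imult F l P = (if polar F P Q \<noteq> 0 then 1 else 2)"
proof -
  have "(\<lambda>s. ev F (frame_point P Q Q s 0)) = (\<lambda>s. ev F Q * s^2 + polar F P Q * s)"
    using assms(2) by (simp add: quadratic_form_lin_comb3[OF assms(1)] fun_eq_iff algebra_simps)
  then show ?thesis
    using imult_eq_vanish_order[OF assms(3,4)] vanish_order_quadratic[OF assms(5)] by simp
qed

section \<open>The quartic \<open>F\<^sub>2\<^sup>2 + F\<^sub>1\<^sup>3 Z\<close>\<close>

definition conic_line_quartic :: "hpoly \<Rightarrow> pt \<Rightarrow> hpoly" where
  "conic_line_quartic F l = (\<lambda>x y z. (F x y z)^2 + lin_form l (x, y, z) ^ 3 * z)"

lemma ev_conic_line_quartic:
  "ev (conic_line_quartic F l) X = (ev F X)^2 + lin_form l X ^ 3 * lin_form (0, 0, 1) X"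
  by (cases X) (simp add: conic_line_quartic_def ev_def lin_form_def)

lemma conic_line_quartic_scale3:
  "quadratic_form F \<Longrightarrow> ev (conic_line_quartic F l) (scale3 k X) = k^4 * ev (conic_line_quartic F l) X"
  by (simp add: ev_conic_line_quartic quadratic_form_scale3 lin_form_scale3 algebra_simps
      power2_eq_square power3_eq_cube power4_eq_xxxx)

lemma conic_line_quartic_frame_point:
  assumes "quadratic_form F" "ev F P = 0" "lin_form l P = 0" "lin_form l Q = 0"
  shows "ev (conic_line_quartic F l) (frame_point P Q R s t)
    = (ev F Q * s^2 + polar F Q R * s * t + ev F R * t^2 + polar F P Q * s + polar F P R * t)^2
      + lin_form l R ^ 3 * lin_form (0, 0, 1) (frame_point P Q R s t) * t^3"
  using assms by (simp add: ev_conic_line_quartic quadratic_form_lin_comb3 lin_form_lin_comb3 algebra_simps)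

lemma gradient_conic_line_quartic_at_infinity:
  fixes a b c x y :: complex
  assumes "quadratic_form F" "F x y 0 = 0"
  defines "G \<equiv> conic_line_quartic F (a, b, c)"
  shows "dX G (x, y, 0) = 0" "dY G (x, y, 0) = 0" "dZ G (x, y, 0) = lin_form (a, b, c) (x, y, 0) ^ 3"
proof -
  obtain c1 c2 c3 c4 c5 c6 where F: "\<And>x y z. F x y z = c1 * x^2 + c2 * y^2 + c3 * z^2 + c4 * x * y + c5 * x * z + c6 * y * z"
    using assms unfolding quadratic_form_def by blast
  have F0: "c1 * x^2 + c2 * y^2 + c4 * x * y = 0"
    using assms(2) by (simp add: F)
  show "dX G (x, y, 0) = 0" "dY G (x, y, 0) = 0" "dZ G (x, y, 0) = lin_form (a, b, c) (x, y, 0) ^ 3"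
    unfolding dX_def dY_def dZ_def G_def conic_line_quartic_def lin_form_def F
    by (auto intro!: DERIV_imp_deriv derivative_eq_intros simp: F0)
qed

lemma some_on_line_not_proportional:
  assumes "l \<noteq> (0, 0, 0)" "Q = (SOME Q. on_line l Q \<and> \<not> proportional P Q)"
  shows "on_line l Q" "\<not> proportional P Q"
  using someI_ex[OF exists_on_line_not_proportional[OF assms(1)]] assms(2) by blast+

lemma conic_line_frame:
  assumes F: "quadratic_form F" and l: "l \<noteq> (0, 0, 0)"
    and l_not_comp: "\<not> (\<exists>d e f. \<forall>x y z. F x y z = lin_form l (x, y, z) * (d * x + e * y + f * z))"
    and P: "smooth_at F P" "on_line l P"
    and Q: "Q = (SOME Q. on_line l Q \<and> \<not> proportional P Q)" and D: "det3 P Q R \<noteq> 0"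
  shows "lin_form l R \<noteq> 0" "ev F Q \<noteq> 0 \<or> polar F P Q \<noteq> 0" "polar F P Q \<noteq> 0 \<or> polar F P R \<noteq> 0"
    "imult F l P = (if polar F P Q \<noteq> 0 then 1 else 2)"
proof -
  have lPQ: "lin_form l P = 0" "lin_form l Q = 0"
    using P(2) some_on_line_not_proportional[OF l Q] by (simp_all add: on_line_iff_lin_form)
  show lR: "lin_form l R \<noteq> 0"
    using lin_form_eq_zero_of_det3[OF D lPQ] l by auto
  have FP: "ev F P = 0"
    using P(1) by (simp add: smooth_at_def)
  show \<alpha>\<beta>: "ev F Q \<noteq> 0 \<or> polar F P Q \<noteq> 0"
    using quadratic_form_line_component[OF F D lPQ lR FP] l_not_comp by blast
  show "polar F P Q \<noteq> 0 \<or> polar F P R \<noteq> 0"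
    by (rule polar_ne_zero_of_smooth[OF F P(1) D])
  show "imult F l P = (if polar F P Q \<noteq> 0 then 1 else 2)"
    using imult_conic_line[OF F FP P(2) Q \<alpha>\<beta>] .
qed

lemma type_a_conic_line_quartic_affine:
  assumes F: "quadratic_form F" and l: "l \<noteq> (0, 0, 0)"
    and l_not_comp: "\<not> (\<exists>d e f. \<forall>x y z. F x y z = lin_form l (x, y, z) * (d * x + e * y + f * z))"
    and P: "smooth_at F P" "on_line l P" "\<not> on_line (0, 0, 1) P"
  shows "type_a (conic_line_quartic F l) (3 * imult F l P - 1) P"
proof -
  define Q where "Q = (SOME Q. on_line l Q \<and> \<not> proportional P Q)"
  have "P \<noteq> (0, 0, 0)"
    using P(3) by (auto simp: on_line_def)
  then obtain R where D: "det3 P Q R \<noteq> 0"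
    using exists_det3_ne_zero some_on_line_not_proportional[OF l Q_def] by blast
  note frame = conic_line_frame[OF F l l_not_comp P(1,2) Q_def D]
  define Gl where "Gl p = ev (conic_line_quartic F l) (frame_point P Q R (fst p) (snd p))" for p
  define w where "w u = lin_form l R ^ 3 * lin_form (0, 0, 1) (frame_point P Q R (fst u) (snd u))" for u
  have "C1_on w UNIV"
    unfolding w_def lin_form_lin_comb3 by (intro C1_on_intros)
  moreover have "w (0, 0) \<noteq> 0"
    using frame(1) P(3) by (simp add: w_def lin_form_lin_comb3 on_line_iff_lin_form)
  moreover have "ev F P = 0" "lin_form l P = 0" "lin_form l Q = 0"
    using P(1,2) some_on_line_not_proportional[OF l Q_def] by (simp_all add: smooth_at_def on_line_iff_lin_form)
  then have Gl: "Gl (s, t)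
      = (ev F Q * s^2 + polar F Q R * s * t + ev F R * t^2 + polar F P Q * s + polar F P R * t)^2
        + w (s, t) * t^3" for s t
    using conic_line_quartic_frame_point[OF F] by (simp add: Gl_def w_def mult.assoc)
  ultimately have "germ_equiv {p. Gl p = 0} (0, 0) (a_germ (if polar F P Q \<noteq> 0 then 2 else 5)) (0, 0)"
    using germ_equiv_sq_plus_unit_t3[OF Gl] frame(2,3) by blast
  then show ?thesis
    using frame(4) unfolding Gl_def
    by (intro type_a_of_frame_germ[OF conic_line_quartic_scale3[OF F] D \<open>P \<noteq> (0, 0, 0)\<close>]) auto
qed

lemma proportional_if_on_line_at_infinity:
  fixes a b c :: complex
  assumes ab: "a \<noteq> 0 \<or> b \<noteq> 0" and "on_line (a, b, c) P" "on_line (a, b, c) Q"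
    and "on_line (0, 0, 1) P" "on_line (0, 0, 1) Q" "P \<noteq> (0, 0, 0)"
  shows "proportional P Q"
proof -
  obtain p1 p2 p3 q1 q2 q3 where pts: "P = (p1, p2, p3)" "Q = (q1, q2, q3)"
    by (metis prod.exhaust)
  have "p3 = 0" "q3 = 0"
    using assms(4,5) by (simp_all add: pts on_line_def)
  then have "a * p1 + b * p2 = 0" "a * q1 + b * q2 = 0"
    using assms(2,3) by (simp_all add: pts on_line_def)
  then have "a * (p1 * q2 - p2 * q1) = 0" "b * (p1 * q2 - p2 * q1) = 0"
    by algebra+
  then have "p1 * q2 - p2 * q1 = 0"
    using ab by auto
  then show ?thesis
    unfolding pts using assms(6) \<open>p3 = 0\<close> \<open>q3 = 0\<close>
    by (intro proportional_if_cross_eq_zero) (simp_all add: pts)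
qed

lemma det3_ne_zero_at_infinity:
  assumes "on_line (0, 0, 1) P" "on_line (0, 0, 1) R" "P \<noteq> (0, 0, 0)" "\<not> proportional P R"
    and "\<not> on_line (0, 0, 1) X"
  shows "det3 P R X \<noteq> 0"
proof -
  obtain p1 p2 p3 r1 r2 r3 x1 x2 x3 where pts: "P = (p1, p2, p3)" "R = (r1, r2, r3)" "X = (x1, x2, x3)"
    by (metis prod.exhaust)
  have "p3 = 0" "r3 = 0" "x3 \<noteq> 0"
    using assms(1,2,5) by (simp_all add: pts on_line_def)
  have "p1 * r2 - p2 * r1 \<noteq> 0"
  proof
    assume "p1 * r2 - p2 * r1 = 0"
    then have "proportional P R"
      unfolding pts using assms(3) \<open>p3 = 0\<close> \<open>r3 = 0\<close>
      by (intro proportional_if_cross_eq_zero) (simp_all add: pts)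
    then show False
      using assms(4) by blast
  qed
  moreover have "det3 P R X = x3 * (p1 * r2 - p2 * r1)"
    using \<open>p3 = 0\<close> \<open>r3 = 0\<close> by (simp add: pts det3_def algebra_simps)
  ultimately show ?thesis
    using \<open>x3 \<noteq> 0\<close> by simp
qed

lemma det3_swap: "det3 P R Q = - det3 P Q R"
  by (cases P, cases Q, cases R) (simp add: det3_def algebra_simps)

lemma type_a_conic_line_quartic_at_infinity:
  fixes a b c :: complex
  assumes F: "quadratic_form F" and ab: "a \<noteq> 0 \<or> b \<noteq> 0"
    and l_not_comp: "\<not> (\<exists>d e f. \<forall>x y z. F x y z = lin_form (a, b, c) (x, y, z) * (d * x + e * y + f * z))"
    and inf_not_comp: "\<not> (\<exists>d e f. \<forall>x y z. F x y z = z * (d * x + e * y + f * z))"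
    and P: "smooth_at F P" "on_line (a, b, c) P" "on_line (0, 0, 1) P" "P \<noteq> (0, 0, 0)"
  shows "type_a (conic_line_quartic F (a, b, c))
    (3 * imult F (a, b, c) P + imult F (0, 0, 1) P - 1) P"
proof -
  define Q where "Q = (SOME Q. on_line (a, b, c) Q \<and> \<not> proportional P Q)"
  define R where "R = (SOME R. on_line (0, 0, 1) R \<and> \<not> proportional P R)"
  have l: "(a, b, c) \<noteq> (0, 0, 0)"
    using ab by auto
  note Q = some_on_line_not_proportional[OF l Q_def]
  have R: "on_line (0, 0, 1) R" "\<not> proportional P R"
    using some_on_line_not_proportional[OF _ R_def] by simp_all
  have Q_finite: "\<not> on_line (0, 0, 1) Q"
    using proportional_if_on_line_at_infinity[OF ab P(2) Q(1) P(3) _ P(4)] Q(2) by blast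
  have D': "det3 P R Q \<noteq> 0"
    by (rule det3_ne_zero_at_infinity[OF P(3) R(1) P(4) R(2) Q_finite])
  then have D: "det3 P Q R \<noteq> 0"
    by (simp add: det3_swap[of P Q R])
  have inf_not_comp': "\<not> (\<exists>d e f. \<forall>x y z. F x y z = lin_form (0, 0, 1) (x, y, z) * (d * x + e * y + f * z))"
    using inf_not_comp by (simp add: lin_form_def)
  note frame = conic_line_frame[OF F l l_not_comp P(1,2) Q_def D]
  note frame_inf = conic_line_frame[OF F _ inf_not_comp' P(1,3) R_def D', simplified]
  define Gl where "Gl p = ev (conic_line_quartic F (a, b, c)) (frame_point P Q R (fst p) (snd p))" for p
  define \<kappa> where "\<kappa> = lin_form (a, b, c) R ^ 3 * lin_form (0, 0, 1) Q"
  have "\<kappa> \<noteq> 0"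
    using frame(1) Q_finite by (simp add: \<kappa>_def on_line_iff_lin_form)
  have "ev F P = 0" "lin_form (a, b, c) P = 0" "lin_form (a, b, c) Q = 0"
    "lin_form (0, 0, 1) P = 0" "lin_form (0, 0, 1) R = 0"
    using P(1,2,3) Q(1) R(1) by (simp_all add: smooth_at_def on_line_iff_lin_form)
  then have Gl: "Gl (s, t)
      = (ev F Q * s^2 + polar F Q R * s * t + ev F R * t^2 + polar F P Q * s + polar F P R * t)^2
        + \<kappa> * s * t^3" for s t
    using conic_line_quartic_frame_point[OF F] by (simp add: Gl_def \<kappa>_def lin_form_lin_comb3 algebra_simps)
  have "germ_equiv {p. Gl p = 0} (0, 0)
      (a_germ (if polar F P Q \<noteq> 0 then if polar F P R \<noteq> 0 then 3 else 4 else 6)) (0, 0)"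
    using germ_equiv_sq_plus_s_t3[OF Gl \<open>\<kappa> \<noteq> 0\<close>] frame(2,3) frame_inf(2) by blast
  then show ?thesis
    using frame(3,4) frame_inf(4) unfolding Gl_def
    by (intro type_a_of_frame_germ[OF conic_line_quartic_scale3[OF F] D P(4)]) auto
qed

lemma conic_line_quartic_smooth_at_infinity:
  fixes a b c :: complex
  assumes F: "quadratic_form F"
    and inf_not_comp: "\<not> (\<exists>d e f. \<forall>x y z. F x y z = z * (d * x + e * y + f * z))"
    and P: "ev F P = 0" "on_line (0, 0, 1) P" "\<not> on_line (a, b, c) P" "P \<noteq> (0, 0, 0)"
  defines "G \<equiv> conic_line_quartic F (a, b, c)"
  shows "smooth_at G P \<and> dX G P = 0 \<and> dY G P = 0 \<and> imult G (0, 0, 1) P = 2 * imult F (0, 0, 1) P"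
proof -
  define R where "R = (SOME R. on_line (0, 0, 1) R \<and> \<not> proportional P R)"
  have R: "on_line (0, 0, 1) R" "\<not> proportional P R"
    using some_on_line_not_proportional[OF _ R_def] by simp_all
  have D: "det3 P R (0, 0, 1) \<noteq> 0"
    by (rule det3_ne_zero_at_infinity[OF P(2) R(1) P(4) R(2)]) (simp add: on_line_def)
  have z: "lin_form (0, 0, 1) P = 0" "lin_form (0, 0, 1) R = 0"
    using P(2) R(1) by (simp_all add: on_line_iff_lin_form)
  have \<epsilon>\<delta>: "ev F R \<noteq> 0 \<or> polar F P R \<noteq> 0"
    using quadratic_form_line_component[OF F D z _ P(1)] inf_not_comp by (auto simp: lin_form_def)
  have "(\<lambda>s. ev G (frame_point P R R s 0)) = (\<lambda>s. (ev F R * s^2 + polar F P R * s)^2)"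
    using P(1) z by (simp add: G_def ev_conic_line_quartic quadratic_form_lin_comb3[OF F]
        lin_form_lin_comb3 fun_eq_iff algebra_simps)
  then have "imult G (0, 0, 1) P = (if polar F P R \<noteq> 0 then 2 else 4)"
    using imult_eq_vanish_order[OF P(2) R_def] vanish_order_quadratic_squared[OF \<epsilon>\<delta>] by simp
  moreover have "imult F (0, 0, 1) P = (if polar F P R \<noteq> 0 then 1 else 2)"
    by (rule imult_conic_line[OF F P(1,2) R_def \<epsilon>\<delta>])
  moreover obtain p1 p2 where "P = (p1, p2, 0)"
    using P(2) by (cases P) (simp add: on_line_def)
  then have "dX G P = 0" "dY G P = 0" "dZ G P = lin_form (a, b, c) P ^ 3" "ev G P = 0"
    using gradient_conic_line_quartic_at_infinity[OF F, of p1 p2] P(1)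
    by (simp_all add: G_def ev_def conic_line_quartic_def)
  ultimately show ?thesis
    using P(3) by (simp add: smooth_at_def on_line_iff_lin_form)
qed

theorem lemma1:
  fixes a b c :: complex and F2 :: hpoly and P :: pt
  assumes F2_quad: "\<exists>c1 c2 c3 c4 c5 c6. \<forall>x y z. F2 x y z = c1*x^2 + c2*y^2 + c3*z^2 + c4*x*y + c5*x*z + c6*y*z"
    and L_ne_Linf: "a \<noteq> 0 \<or> b \<noteq> 0"
    and F2_nonzero: "\<exists>x y z. F2 x y z \<noteq> 0"
    and L_not_comp: "\<not> (\<exists>d e f. \<forall>x y z. F2 x y z = (a*x + b*y + c*z) * (d*x + e*y + f*z))"
    and Linf_not_comp: "\<not> (\<exists>d e f. \<forall>x y z. F2 x y z = z * (d*x + e*y + f*z))"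
    and P_nonzero: "P \<noteq> (0, 0, 0)"
    and smooth: "smooth_at F2 P"
  shows
   "(let F1 = (\<lambda>x y z. a*x + b*y + c*z);
         G = (\<lambda>x y z. (F2 x y z)^2 + (F1 x y z)^3 * z);
         L = (a, b, c); Linf = (0, 0, 1);
         \<iota>1 = imult F2 L P; \<iota>2 = imult F2 Linf P in
     (on_line L P \<and> \<not> on_line Linf P \<longrightarrow> type_a G (3*\<iota>1 - 1) P) \<and>
     (on_line Linf P \<and> \<not> on_line L P \<longrightarrow>
        smooth_at G P \<and> dX G P = 0 \<and> dY G P = 0 \<and> imult G Linf P = 2*\<iota>2) \<and>
     (on_line L P \<and> on_line Linf P \<longrightarrow> type_a G (3*\<iota>1 + \<iota>2 - 1) P))"
proof -
  have F: "quadratic_form F2"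
    using F2_quad unfolding quadratic_form_def .
  have l_not_comp: "\<not> (\<exists>d e f. \<forall>x y z. F2 x y z = lin_form (a, b, c) (x, y, z) * (d * x + e * y + f * z))"
    using L_not_comp by (simp add: lin_form_def)
  have G: "(\<lambda>x y z. (F2 x y z)^2 + (a * x + b * y + c * z)^3 * z) = conic_line_quartic F2 (a, b, c)"
    by (simp add: conic_line_quartic_def lin_form_def)
  have "on_line (a, b, c) P \<and> \<not> on_line (0, 0, 1) P \<longrightarrow>
      type_a (conic_line_quartic F2 (a, b, c)) (3 * imult F2 (a, b, c) P - 1) P"
    using type_a_conic_line_quartic_affine[OF F _ l_not_comp smooth] L_ne_Linf by auto
  moreover have "on_line (0, 0, 1) P \<and> \<not> on_line (a, b, c) P \<longrightarrow>
      smooth_at (conic_line_quartic F2 (a, b, c)) P \<and> dX (conic_line_quartic F2 (a, b, c)) P = 0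
      \<and> dY (conic_line_quartic F2 (a, b, c)) P = 0
      \<and> imult (conic_line_quartic F2 (a, b, c)) (0, 0, 1) P = 2 * imult F2 (0, 0, 1) P"
    using conic_line_quartic_smooth_at_infinity[OF F Linf_not_comp] smooth P_nonzero
    by (simp add: smooth_at_def)
  moreover have "on_line (a, b, c) P \<and> on_line (0, 0, 1) P \<longrightarrow>
      type_a (conic_line_quartic F2 (a, b, c)) (3 * imult F2 (a, b, c) P + imult F2 (0, 0, 1) P - 1) P"
    using type_a_conic_line_quartic_at_infinity[OF F L_ne_Linf l_not_comp Linf_not_comp smooth] P_nonzero
    by simp
  ultimately show ?thesis
    unfolding Let_def G by blast
qed

end
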